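(* Let $\tau$ be a row-standard tableau. Then there exists a sequence of integers $i_1,\dots,i_m$ such that $\mathrm{st}(\tau)=\delta_{i_1}\cdots\delta_{i_m}(\tau)$ (each $\delta_{i_k}$ being applied to a tableau lying in $D_{i_k}$), and $n_{\mathrm{inv}}(\tau)$ is the minimal length $m$ of such a sequence.
   Context: Fix a Young diagram $Y$ with $n$ boxes. A row-standard tableau of shape $Y$ is a bijective numbering of its boxes by $1,\dots,n$ increasing left to right along rows; it is standard if also increasing top to bottom along columns. The standardization $\mathrm{st}(\tau)$ of a row-standard $\tau$ is the standard tableau obtained by rearranging the entries of each column of $\tau$ in increasing order from top to bottom. An inversion of $\tau$ is a pair $i<j$ in the same column such that either (i) $i$ or $j$ has no box immediately to its right and $i$ is below $j$, or (ii) $i,j$ have right neighbours $i',j'$ with $i'>j'$; $n_{\mathrm{inv}}(\tau)$ is their number. For $i\in\{1,\dots,n\}$, $D_i$ is the set of row-standard $\tau$ such that: (1) $i$ is not in the first row, and letting $j$ be the entry immediately above $i$: (2) if $i$ has a right neighbour $i'$ then $j<i'$, and if $j$ has a right neighbour $j'$ then $i<j'$; (3) for every $k$ in the same column as $i,j$ with $\min(i,j)<k<\max(i,j)$, exactly one of $(\min(i,j),k)$, $(k,\max(i,j))$ is an inversion. For $\tau\in D_i$, with $i_1<\dots<i_q=i$ the entries of the row of $i$ up to $i$ and $j_1<\dots<j_q=j$ those of the row of $j$ up to $j$, $\delta_i(\tau)$ is obtained by swapping $i_k$ and $j_k$ for all $k\le q$. *)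

theory Defs
  imports Main
begin

text \<open>Row 0 is the first (top) row; boxes are pairs (row, column),
columns indexed from 0. Tableaux are maps from boxes to entries, with value 0
outside the diagram (so that tableaux are compared as functions).\<close>

type_synonym tableau = "nat \<times> nat \<Rightarrow> nat"

definition young_diagram :: "nat list \<Rightarrow> bool" where
  "young_diagram Y \<longleftrightarrow> sorted (rev Y) \<and> (\<forall>l\<in>set Y. 0 < l)"

definition boxes :: "nat list \<Rightarrow> (nat \<times> nat) set" where
  "boxes Y = {(r, c). r < length Y \<and> c < Y ! r}"

definition size_yd :: "nat list \<Rightarrow> nat" where
  "size_yd Y = sum_list Y"

definition tableau :: "nat list \<Rightarrow> tableau \<Rightarrow> bool" where
  "tableau Y \<tau> \<longleftrightarrow> bij_betw \<tau> (boxes Y) {1..size_yd Y} \<and> (\<forall>b. b \<notin> boxes Y \<longrightarrow> \<tau> b = 0)"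

definition row_standard :: "nat list \<Rightarrow> tableau \<Rightarrow> bool" where
  "row_standard Y \<tau> \<longleftrightarrow> tableau Y \<tau> \<and>
     (\<forall>r c. (r, Suc c) \<in> boxes Y \<longrightarrow> \<tau> (r, c) < \<tau> (r, Suc c))"

definition col_entries :: "nat list \<Rightarrow> tableau \<Rightarrow> nat \<Rightarrow> nat set" where
  "col_entries Y \<tau> c = {\<tau> (r, c) | r. (r, c) \<in> boxes Y}"

definition st :: "nat list \<Rightarrow> tableau \<Rightarrow> tableau" where
  "st Y \<tau> = (\<lambda>(r, c). if (r, c) \<in> boxes Y
      then sorted_list_of_set (col_entries Y \<tau> c) ! r else 0)"

definition inversion_boxes :: "nat list \<Rightarrow> tableau \<Rightarrow> nat \<times> nat \<Rightarrow> nat \<times> nat \<Rightarrow> bool" where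
  "inversion_boxes Y \<tau> b1 b2 \<longleftrightarrow>
     b1 \<in> boxes Y \<and> b2 \<in> boxes Y \<and> snd b1 = snd b2 \<and> \<tau> b1 < \<tau> b2 \<and>
     ( (((fst b1, Suc (snd b1)) \<notin> boxes Y \<or> (fst b2, Suc (snd b2)) \<notin> boxes Y)
          \<and> fst b1 > fst b2)
     \<or> ((fst b1, Suc (snd b1)) \<in> boxes Y \<and> (fst b2, Suc (snd b2)) \<in> boxes Y
          \<and> \<tau> (fst b1, Suc (snd b1)) > \<tau> (fst b2, Suc (snd b2))))"

definition is_inversion :: "nat list \<Rightarrow> tableau \<Rightarrow> nat \<Rightarrow> nat \<Rightarrow> bool" where
  "is_inversion Y \<tau> i j \<longleftrightarrow>
     (\<exists>b1 b2. inversion_boxes Y \<tau> b1 b2 \<and> \<tau> b1 = i \<and> \<tau> b2 = j)"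

definition n_inv :: "nat list \<Rightarrow> tableau \<Rightarrow> nat" where
  "n_inv Y \<tau> = card {(b1, b2). inversion_boxes Y \<tau> b1 b2}"

definition D :: "nat list \<Rightarrow> nat \<Rightarrow> tableau set" where
  "D Y i = {\<tau>. row_standard Y \<tau> \<and>
     (\<exists>r c. (r, c) \<in> boxes Y \<and> \<tau> (r, c) = i \<and> 0 < r \<and>
        (let j = \<tau> (r - 1, c) in
          ((r, Suc c) \<in> boxes Y \<longrightarrow> j < \<tau> (r, Suc c)) \<and>
          ((r - 1, Suc c) \<in> boxes Y \<longrightarrow> i < \<tau> (r - 1, Suc c)) \<and>
          (\<forall>k \<in> col_entries Y \<tau> c. min i j < k \<and> k < max i j \<longrightarrow>
             (is_inversion Y \<tau> (min i j) k \<noteq> is_inversion Y \<tau> k (max i j)))))}"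

definition pos :: "nat list \<Rightarrow> tableau \<Rightarrow> nat \<Rightarrow> nat \<times> nat" where
  "pos Y \<tau> i = (THE b. b \<in> boxes Y \<and> \<tau> b = i)"

definition delta :: "nat list \<Rightarrow> nat \<Rightarrow> tableau \<Rightarrow> tableau" where
  "delta Y i \<tau> = (let (r, c) = pos Y \<tau> i in
     (\<lambda>(r', c'). if r' = r \<and> c' \<le> c then \<tau> (r - 1, c')
                 else if r' = r - 1 \<and> c' \<le> c then \<tau> (r, c')
                 else \<tau> (r', c')))"

text \<open>delta_seq Y [i1,...,im] \<tau> \<sigma>: \<sigma> = delta_i1 (... (delta_im \<tau>)), where each
delta_ik is applied to a tableau lying in D_ik.\<close>
fun delta_seq :: "nat list \<Rightarrow> nat list \<Rightarrow> tableau \<Rightarrow> tableau \<Rightarrow> bool" where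
  "delta_seq Y [] \<tau> \<sigma> \<longleftrightarrow> \<sigma> = \<tau>"
| "delta_seq Y (i # ws) \<tau> \<sigma> \<longleftrightarrow>
     (\<exists>\<rho>. delta_seq Y ws \<tau> \<rho> \<and> \<rho> \<in> D Y i \<and> \<sigma> = delta Y i \<rho>)"

end

theory Submission
  imports Defs
begin

text \<open>
  For a row-standard tableau \<tau> we count inversions box-wise. A pair of boxes
  of one column is an inversion exactly when it carries increasing entries and satisfies an
  order-independent condition on the boxes, called its shape below; the shape relation is
  total and asymmetric on distinct boxes of a column.

  The operation delta_i exchanges the two row segments ending in the box (r,c) of i and the
  box above it; this is the tableau \<tau> composed with a box permutation. Every pair of boxes not
  involving the two swapped boxes of column c keeps its inversion status, so the change of
  n_inv is governed by pairs meeting those two boxes. If the two swapped boxes "agree" on every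
  box of the column whose entry lies between theirs, the change is exactly +1 or -1; condition
  (3) in the definition of D_i is equivalent to this agreement. Hence each admissible delta
  lowers n_inv by at most one, which gives the lower bound for every sequence reaching st(\<tau>).

  Conversely, if \<tau> is not standard, take the rightmost column c containing a descent between
  rows r-1 and r. Column c+1 is increasing, and this forces \<tau> to lie in D_i for the entry i
  of box (r,c), with delta_i lowering n_inv by exactly one and keeping st(\<tau>). Induction on
  n_inv then reaches a standard tableau, which is its own standardization and has no
  inversions. This yields a sequence of length exactly n_inv(\<tau>).
\<close>

lemma box_upward_closed:
  assumes "young_diagram Y" "(r, c) \<in> boxes Y" "s \<le> r"
  shows "(s, c) \<in> boxes Y"
proof -
  have "sorted (rev Y)" using assms(1) by (simp add: young_diagram_def)
  moreover have "r < length Y" "c < Y ! r" using assms(2) by (auto simp: boxes_def)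
  ultimately have "Y ! r \<le> Y ! s" using assms(3) sorted_rev_nth_mono by blast
  thus ?thesis using assms(2,3) by (auto simp: boxes_def)
qed

lemma box_leftward_closed: "(r, c) \<in> boxes Y \<Longrightarrow> c' \<le> c \<Longrightarrow> (r, c') \<in> boxes Y"
  by (auto simp: boxes_def)

lemma finite_boxes: "finite (boxes Y)"
proof -
  have "boxes Y \<subseteq> {..<length Y} \<times> {..<Max (insert 0 (set Y))}"
    by (auto simp: boxes_def intro!: less_le_trans[OF _ Max_ge])
  thus ?thesis by (rule finite_subset) auto
qed

lemma tableau_inj_on: "tableau Y \<tau> \<Longrightarrow> inj_on \<tau> (boxes Y)"
  by (simp add: tableau_def bij_betw_def)

lemma row_standard_tableau: "row_standard Y \<tau> \<Longrightarrow> tableau Y \<tau>"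
  by (simp add: row_standard_def)

lemma row_standard_less: "row_standard Y \<tau> \<Longrightarrow> (r, Suc c) \<in> boxes Y \<Longrightarrow> \<tau> (r, c) < \<tau> (r, Suc c)"
  by (simp add: row_standard_def)

text \<open>The element of rank k (number of smaller elements) of a finite set of naturals sits at
  position k of its sorted list; this is what standardization computes in each column.\<close>

lemma nth_sorted_list_of_set_rank:
  fixes S :: "nat set"
  assumes "finite S" "x \<in> S"
  shows "sorted_list_of_set S ! card {y\<in>S. y < x} = x"
proof -
  define xs where "xs = sorted_list_of_set S"
  have ss: "sorted_wrt (<) xs" and sx: "set xs = S" and so: "sorted xs"
    using assms(1) by (auto simp: xs_def strict_sorted_list_of_set)
  have dx: "distinct xs" using ss strict_sorted_iff by blast
  obtain k where k: "k < length xs" "xs ! k = x" using assms(2) sx by (metis in_set_conv_nth)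
  have "{y\<in>S. y < x} = (\<lambda>m. xs ! m) ` {..<k}"
  proof (intro equalityI subsetI)
    fix y assume "y \<in> {y\<in>S. y < x}"
    then obtain m where m: "m < length xs" "xs ! m = y" "y < x"
      using sx by (auto simp: in_set_conv_nth)
    have "m < k"
    proof (rule ccontr)
      assume "\<not> m < k"
      then have "xs ! k \<le> xs ! m" using sorted_nth_mono[OF so] m by auto
      thus False using m k by auto
    qed
    thus "y \<in> (\<lambda>m. xs ! m) ` {..<k}" using m by auto
  next
    fix y assume "y \<in> (\<lambda>m. xs ! m) ` {..<k}"
    then obtain m where "m < k" "y = xs ! m" by auto
    thus "y \<in> {y\<in>S. y < x}" using sorted_wrt_nth_less[OF ss] k sx by auto
  qed
  moreover have "inj_on (\<lambda>m. xs ! m) {..<k}"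
    using dx k by (auto simp: inj_on_def nth_eq_iff_index_eq)
  ultimately have "card {y\<in>S. y < x} = k" by (simp add: card_image)
  thus ?thesis using k xs_def by simp
qed

lemma sum_square_two_points:
  fixes g :: "'a \<Rightarrow> 'a \<Rightarrow> 'b::comm_monoid_add"
  assumes fin: "finite B" and pq: "p \<in> B" "q \<in> B" "p \<noteq> q"
    and vanish: "\<And>x y. x \<in> B - {p, q} \<Longrightarrow> y \<in> B - {p, q} \<Longrightarrow> g x y = 0"
    and diag: "g p p = 0" "g q q = 0"
  shows "(\<Sum>x\<in>B. \<Sum>y\<in>B. g x y) = g p q + g q p + (\<Sum>k\<in>B - {p, q}. g p k + g q k + g k p + g k q)"
proof -
  define R where "R = B - {p, q}"
  have B: "B = insert p (insert q R)" and pR: "p \<notin> R" and qR: "q \<notin> R" and finR: "finite R"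
    using pq fin by (auto simp: R_def)
  have inner: "(\<Sum>y\<in>B. g x y) = g x p + g x q + (\<Sum>y\<in>R. g x y)" for x
    using B pR qR finR pq by (simp add: add.assoc)
  have "(\<Sum>x\<in>B. \<Sum>y\<in>B. g x y) = (\<Sum>x\<in>B. g x p + g x q + (\<Sum>y\<in>R. g x y))"
    by (simp add: inner)
  also have "\<dots> = (g p p + g p q + (\<Sum>y\<in>R. g p y)) + (g q p + g q q + (\<Sum>y\<in>R. g q y))
       + (\<Sum>x\<in>R. g x p + g x q + (\<Sum>y\<in>R. g x y))"
    using B pR qR finR pq by (simp add: add.assoc)
  also have "(\<Sum>x\<in>R. g x p + g x q + (\<Sum>y\<in>R. g x y)) = (\<Sum>x\<in>R. g x p + g x q)"
    using vanish by (intro sum.cong) (auto simp: R_def)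
  finally show ?thesis
    using diag by (simp add: R_def sum.distrib add_ac)
qed

definition column_increasing :: "nat list \<Rightarrow> tableau \<Rightarrow> nat \<Rightarrow> bool" where
  "column_increasing Y \<tau> c \<longleftrightarrow> (\<forall>r. (Suc r, c) \<in> boxes Y \<longrightarrow> \<tau> (r, c) < \<tau> (Suc r, c))"

definition standard :: "nat list \<Rightarrow> tableau \<Rightarrow> bool" where
  "standard Y \<tau> \<longleftrightarrow> (\<forall>c. column_increasing Y \<tau> c)"

lemma column_increasing_less:
  assumes "young_diagram Y" "column_increasing Y \<tau> c" "(t, c) \<in> boxes Y" "s < t"
  shows "\<tau> (s, c) < \<tau> (t, c)"
  using assms(3,4)
proof (induction t)
  case 0
  then show ?case by simp
next
  case (Suc t)
  have step: "\<tau> (t, c) < \<tau> (Suc t, c)"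
    using assms(2) Suc.prems by (simp add: column_increasing_def)
  show ?case
  proof (cases "s = t")
    case False
    moreover have "(t, c) \<in> boxes Y" using box_upward_closed[OF assms(1) Suc.prems(1)] by simp
    ultimately show ?thesis using Suc step by simp
  qed (use step in simp)
qed

definition inversion_shape :: "nat list \<Rightarrow> tableau \<Rightarrow> nat \<times> nat \<Rightarrow> nat \<times> nat \<Rightarrow> bool" where
  "inversion_shape Y \<tau> b1 b2 \<longleftrightarrow>
     (((fst b1, Suc (snd b1)) \<notin> boxes Y \<or> (fst b2, Suc (snd b2)) \<notin> boxes Y)
          \<and> fst b1 > fst b2)
     \<or> ((fst b1, Suc (snd b1)) \<in> boxes Y \<and> (fst b2, Suc (snd b2)) \<in> boxes Y
          \<and> \<tau> (fst b1, Suc (snd b1)) > \<tau> (fst b2, Suc (snd b2)))"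

lemma inversion_boxes_iff: "inversion_boxes Y \<tau> b1 b2 \<longleftrightarrow>
   b1 \<in> boxes Y \<and> b2 \<in> boxes Y \<and> snd b1 = snd b2 \<and> \<tau> b1 < \<tau> b2 \<and> inversion_shape Y \<tau> b1 b2"
  by (simp add: inversion_boxes_def inversion_shape_def)

lemma inversion_shape_total:
  assumes "tableau Y \<tau>" "x \<in> boxes Y" "y \<in> boxes Y" "snd x = snd y" "x \<noteq> y"
  shows "inversion_shape Y \<tau> x y \<longleftrightarrow> \<not> inversion_shape Y \<tau> y x"
proof -
  obtain a b a' where xy: "x = (a, b)" "y = (a', b)" using assms(4) by (metis prod.collapse)
  have "a \<noteq> a'" using xy assms(5) by auto
  moreover have "(a, Suc b) \<in> boxes Y \<Longrightarrow> (a', Suc b) \<in> boxes Y \<Longrightarrow> \<tau> (a, Suc b) \<noteq> \<tau> (a', Suc b)"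
    using calculation tableau_inj_on[OF assms(1)] by (auto dest: inj_onD)
  ultimately show ?thesis using xy by (auto simp: inversion_shape_def)
qed

lemma standard_no_inversion:
  assumes "young_diagram Y" "standard Y \<tau>"
  shows "\<not> inversion_boxes Y \<tau> b1 b2"
proof
  assume inv: "inversion_boxes Y \<tau> b1 b2"
  obtain a c b where bb: "b1 = (a, c)" "b2 = (b, c)"
    using inv by (cases b1, cases b2) (auto simp: inversion_boxes_iff)
  have b1: "(a, c) \<in> boxes Y" and b2: "(b, c) \<in> boxes Y" and lt: "\<tau> (a, c) < \<tau> (b, c)"
    and shape: "inversion_shape Y \<tau> (a, c) (b, c)"
    using inv bb by (auto simp: inversion_boxes_iff)
  have inc: "\<And>c. column_increasing Y \<tau> c" using assms(2) by (simp add: standard_def)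
  have "\<not> b < a" using column_increasing_less[OF assms(1) inc b1] lt by (metis not_less_iff_gr_or_eq)
  with lt have ab: "a < b" by (cases "a = b") auto
  show False
  proof (cases "(a, Suc c) \<in> boxes Y \<and> (b, Suc c) \<in> boxes Y")
    case True
    then have "\<tau> (a, Suc c) < \<tau> (b, Suc c)" using column_increasing_less[OF assms(1) inc _ ab] by blast
    then show False using shape True by (auto simp: inversion_shape_def)
  qed (use shape ab in \<open>auto simp: inversion_shape_def\<close>)
qed

lemma standard_n_inv:
  assumes "young_diagram Y" "standard Y \<tau>"
  shows "n_inv Y \<tau> = 0"
  using standard_no_inversion[OF assms] by (simp add: n_inv_def)

lemma finite_col_entries: "finite (col_entries Y \<tau> c)"
proof -
  have "col_entries Y \<tau> c = \<tau> ` {b \<in> boxes Y. snd b = c}" by (auto simp: col_entries_def)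
  thus ?thesis using finite_boxes by simp
qed

lemma standard_st:
  assumes yd: "young_diagram Y" and std: "standard Y \<tau>" and tab: "tableau Y \<tau>"
  shows "st Y \<tau> = \<tau>"
proof (rule ext, clarify)
  fix r c
  show "st Y \<tau> (r, c) = \<tau> (r, c)"
  proof (cases "(r, c) \<in> boxes Y")
    case False
    then show ?thesis using tab by (simp add: st_def tableau_def)
  next
    case True
    have inc: "column_increasing Y \<tau> c" using std by (simp add: standard_def)
    have above: "(s, c) \<in> boxes Y" if "s < r" for s
      using box_upward_closed[OF yd True] that by simp
    have smaller: "{y \<in> col_entries Y \<tau> c. y < \<tau> (r, c)} = (\<lambda>s. \<tau> (s, c)) ` {..<r}"
    proof (intro equalityI subsetI)
      fix y assume "y \<in> {y \<in> col_entries Y \<tau> c. y < \<tau> (r, c)}"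
      then obtain s where s: "(s, c) \<in> boxes Y" "y = \<tau> (s, c)" "y < \<tau> (r, c)"
        by (auto simp: col_entries_def)
      have "s < r"
        using column_increasing_less[OF yd inc s(1), of r] s by (cases "s = r") (auto simp: linorder_neq_iff)
      thus "y \<in> (\<lambda>s. \<tau> (s, c)) ` {..<r}" using s by auto
    next
      fix y assume "y \<in> (\<lambda>s. \<tau> (s, c)) ` {..<r}"
      then obtain s where s: "s < r" "y = \<tau> (s, c)" by auto
      thus "y \<in> {y \<in> col_entries Y \<tau> c. y < \<tau> (r, c)}"
        using above column_increasing_less[OF yd inc True s(1)] by (auto simp: col_entries_def)
    qed
    have "inj_on (\<lambda>s. \<tau> (s, c)) {..<r}"
      using above tableau_inj_on[OF tab] by (auto simp: inj_on_def dest: inj_onD)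
    then have "card {y \<in> col_entries Y \<tau> c. y < \<tau> (r, c)} = r" using smaller by (simp add: card_image)
    moreover have "\<tau> (r, c) \<in> col_entries Y \<tau> c" using True by (auto simp: col_entries_def)
    ultimately have "sorted_list_of_set (col_entries Y \<tau> c) ! r = \<tau> (r, c)"
      using nth_sorted_list_of_set_rank[OF finite_col_entries] by metis
    thus ?thesis using True by (simp add: st_def)
  qed
qed

definition inversion_indicator :: "nat list \<Rightarrow> tableau \<Rightarrow> nat \<times> nat \<Rightarrow> nat \<times> nat \<Rightarrow> int" where
  "inversion_indicator Y \<tau> x y = (if inversion_boxes Y \<tau> x y then 1 else 0)"

lemma n_inv_sum: "int (n_inv Y \<tau>) = (\<Sum>x\<in>boxes Y. \<Sum>y\<in>boxes Y. inversion_indicator Y \<tau> x y)"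
proof -
  have "{(x, y). inversion_boxes Y \<tau> x y} =
      {z \<in> boxes Y \<times> boxes Y. inversion_boxes Y \<tau> (fst z) (snd z)}"
    by (auto simp: inversion_boxes_iff)
  then have "int (n_inv Y \<tau>) = (\<Sum>z\<in>boxes Y \<times> boxes Y. inversion_indicator Y \<tau> (fst z) (snd z))"
    unfolding n_inv_def inversion_indicator_def
    by (simp add: sum.inter_filter[OF finite_cartesian_product[OF finite_boxes finite_boxes], symmetric])
  thus ?thesis by (simp add: sum.cartesian_product split_def)
qed

lemma is_inversion_iff:
  assumes "tableau Y \<tau>" "a \<in> boxes Y" "b \<in> boxes Y"
  shows "is_inversion Y \<tau> (\<tau> a) (\<tau> b) \<longleftrightarrow> inversion_boxes Y \<tau> a b"
proof
  assume "is_inversion Y \<tau> (\<tau> a) (\<tau> b)"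
  then obtain b1 b2 where h: "inversion_boxes Y \<tau> b1 b2" "\<tau> b1 = \<tau> a" "\<tau> b2 = \<tau> b"
    by (auto simp: is_inversion_def)
  have "b1 \<in> boxes Y" "b2 \<in> boxes Y" using h(1) by (auto simp: inversion_boxes_iff)
  then have "b1 = a" "b2 = b" using h tableau_inj_on[OF assms(1)] assms(2,3) by (auto dest: inj_onD)
  thus "inversion_boxes Y \<tau> a b" using h by simp
qed (unfold is_inversion_def, blast)

text \<open>The box permutation behind delta: exchange the boxes (r, b) and (r - 1, b) for all b \<le> c.\<close>

definition swap_rows :: "nat \<Rightarrow> nat \<Rightarrow> nat \<times> nat \<Rightarrow> nat \<times> nat" where
  "swap_rows r c = (\<lambda>(a, b). if a = r \<and> b \<le> c then (r - 1, b)
                       else if a = r - 1 \<and> b \<le> c then (r, b) else (a, b))"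

locale row_swap =
  fixes Y :: "nat list" and \<rho> :: tableau and u c :: nat
  assumes young: "young_diagram Y" and rs: "row_standard Y \<rho>"
    and low_box: "(Suc u, c) \<in> boxes Y"
begin

abbreviation "B \<equiv> boxes Y"
abbreviation "\<pi> \<equiv> swap_rows (Suc u) c"
abbreviation "\<sigma> \<equiv> \<rho> \<circ> swap_rows (Suc u) c"
abbreviation "lowbox \<equiv> (Suc u, c)"
abbreviation "upbox \<equiv> (u, c)"

lemma tab: "tableau Y \<rho>"
  using rs by (rule row_standard_tableau)

lemma up_box: "upbox \<in> B"
  using box_upward_closed[OF young low_box] by simp

lemma boxes_distinct: "lowbox \<noteq> upbox"
  by simp

lemma swapped_rows_boxes: "b \<le> c \<Longrightarrow> (Suc u, b) \<in> B \<and> (u, b) \<in> B"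
  using box_leftward_closed[OF low_box] box_leftward_closed[OF up_box] by auto

lemma swap_swap [simp]: "\<pi> (\<pi> x) = x"
  by (cases x) (auto simp: swap_rows_def)

lemma swap_low [simp]: "\<pi> lowbox = upbox" and swap_up [simp]: "\<pi> upbox = lowbox"
  by (auto simp: swap_rows_def)

lemma swap_outside: "x \<notin> B \<Longrightarrow> \<pi> x = x"
  using swapped_rows_boxes by (cases x) (auto simp: swap_rows_def)

lemma swap_bij: "bij_betw \<pi> B B"
proof -
  have "\<pi> x \<in> B" if "x \<in> B" for x
    using that swapped_rows_boxes by (cases x) (auto simp: swap_rows_def)
  thus ?thesis by (intro bij_betw_byWitness[where f'="\<pi>"]) auto
qed

lemma delta_eq_swap: "delta Y (\<rho> lowbox) \<rho> = \<sigma>"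
proof -
  have "pos Y \<rho> (\<rho> lowbox) = lowbox"
    unfolding pos_def using tableau_inj_on[OF tab] low_box
    by (intro the_equality) (auto dest: inj_onD)
  thus ?thesis by (auto simp: delta_def swap_rows_def fun_eq_iff)
qed

lemma swap_tableau: "tableau Y \<sigma>"
proof -
  have "bij_betw \<rho> B {1..size_yd Y}" using tab by (simp add: tableau_def)
  then have "bij_betw \<sigma> B {1..size_yd Y}" using swap_bij bij_betw_trans by blast
  moreover have "\<forall>b. b \<notin> B \<longrightarrow> \<sigma> b = 0" using tab swap_outside by (simp add: tableau_def)
  ultimately show ?thesis by (simp add: tableau_def)
qed

text \<open>The swapped tableau is row-standard iff the two rows still increase across column c;
  this is condition (2) in the definition of D.\<close>

lemma swap_row_standard:
  assumes low: "(Suc u, Suc c) \<in> B \<Longrightarrow> \<rho> upbox < \<rho> (Suc u, Suc c)"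
    and up: "(u, Suc c) \<in> B \<Longrightarrow> \<rho> lowbox < \<rho> (u, Suc c)"
  shows "row_standard Y \<sigma>"
proof -
  have "\<sigma> (a, b) < \<sigma> (a, Suc b)" if ab: "(a, Suc b) \<in> B" for a b
  proof -
    consider "Suc b \<le> c" | "b = c" | "c < b" by linarith
    then show ?thesis
    proof cases
      case 1
      then show ?thesis
        using swapped_rows_boxes[OF 1] row_standard_less[OF rs] ab by (auto simp: swap_rows_def)
    qed (use low up row_standard_less[OF rs] ab in \<open>auto simp: swap_rows_def\<close>)
  qed
  thus ?thesis using swap_tableau by (simp add: row_standard_def)
qed

text \<open>The swap moves boxes only within their column, so column contents and hence the
  standardization are unchanged.\<close>

lemma swap_col_entries: "col_entries Y \<sigma> c' = col_entries Y \<rho> c'"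
proof -
  have "(a, c') \<in> B \<Longrightarrow> \<exists>a'. \<pi> (a, c') = (a', c') \<and> (a', c') \<in> B" for a
    using swapped_rows_boxes by (auto simp: swap_rows_def)
  thus ?thesis unfolding col_entries_def by (metis (no_types, lifting) comp_apply swap_swap)
qed

lemma swap_st: "st Y \<sigma> = st Y \<rho>"
  unfolding st_def swap_col_entries ..

text \<open>Pairs of boxes not meeting the two swapped boxes of column c keep their inversion
  status: the swap is compatible with everything the inversion condition looks at.\<close>

lemma inversion_swap_away:
  assumes x: "(a, b) \<in> B" and y: "(a', b') \<in> B"
    and away: "\<not> (b = c \<and> b' = c \<and> (a \<in> {Suc u, u} \<or> a' \<in> {Suc u, u}))"
  shows "inversion_boxes Y \<sigma> (a, b) (a', b') \<longleftrightarrow> inversion_boxes Y \<rho> (\<pi> (a, b)) (\<pi> (a', b'))"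
proof (cases "b' = b")
  case True
  consider "c < b" | "b = c" | "b < c" by linarith
  then show ?thesis
  proof cases
    case 3
    have "(Suc u, Suc b) \<in> B" "(u, Suc b) \<in> B" "(Suc u, b) \<in> B" "(u, b) \<in> B"
      using swapped_rows_boxes[of "Suc b"] swapped_rows_boxes[of b] 3 by auto
    then show ?thesis
      using x y True 3 by (auto simp: inversion_boxes_iff inversion_shape_def swap_rows_def)
  qed (use x y True away in \<open>auto simp: inversion_boxes_iff inversion_shape_def swap_rows_def\<close>)
qed (auto simp: inversion_boxes_iff swap_rows_def)

text \<open>Within column c the shape relation only reads column c + 1, which the swap leaves alone.\<close>

lemma inversion_shape_swap:
  "snd x = c \<Longrightarrow> snd y = c \<Longrightarrow> inversion_shape Y \<sigma> x y \<longleftrightarrow> inversion_shape Y \<rho> x y"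
  by (cases x, cases y) (simp add: inversion_shape_def swap_rows_def)

end

context row_swap
begin

definition middle_agreement :: bool where
  "middle_agreement \<longleftrightarrow> (\<forall>k\<in>B. snd k = c \<longrightarrow> k \<notin> {lowbox, upbox} \<longrightarrow>
     min (\<rho> lowbox) (\<rho> upbox) < \<rho> k \<longrightarrow> \<rho> k < max (\<rho> lowbox) (\<rho> upbox) \<longrightarrow>
     (inversion_shape Y \<rho> lowbox k \<longleftrightarrow> inversion_shape Y \<rho> upbox k))"

definition defect :: "nat \<times> nat \<Rightarrow> nat \<times> nat \<Rightarrow> int" where
  "defect x y = inversion_indicator Y \<sigma> x y - inversion_indicator Y \<rho> (\<pi> x) (\<pi> y)"

text \<open>Reindexing by the swap writes the change of n_inv as the sum of all defects; the
  defect of a pair vanishes on the diagonal and away from the two swapped boxes.\<close>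

lemma n_inv_swap_diff: "int (n_inv Y \<sigma>) - int (n_inv Y \<rho>) = (\<Sum>x\<in>B. \<Sum>y\<in>B. defect x y)"
proof -
  have inner: "(\<Sum>y\<in>B. inversion_indicator Y \<rho> x (\<pi> y)) = (\<Sum>y\<in>B. inversion_indicator Y \<rho> x y)" for x
    by (rule sum.reindex_bij_betw[OF swap_bij])
  have "(\<Sum>x\<in>B. \<Sum>y\<in>B. inversion_indicator Y \<rho> (\<pi> x) (\<pi> y)) =
      (\<Sum>x\<in>B. \<Sum>y\<in>B. inversion_indicator Y \<rho> x y)"
    unfolding inner by (rule sum.reindex_bij_betw[OF swap_bij])
  thus ?thesis by (simp add: n_inv_sum defect_def sum_subtractf)
qed

lemma defect_diag: "defect x x = 0"
  by (simp add: defect_def inversion_indicator_def inversion_boxes_iff)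

lemma defect_away:
  assumes "x \<in> B" "y \<in> B" "\<not> (snd x = c \<and> snd y = c \<and> (x \<in> {lowbox, upbox} \<or> y \<in> {lowbox, upbox}))"
  shows "defect x y = 0"
proof -
  obtain a b a' b' where xy: "x = (a, b)" "y = (a', b')" by (cases x, cases y)
  have "inversion_boxes Y \<sigma> x y \<longleftrightarrow> inversion_boxes Y \<rho> (\<pi> x) (\<pi> y)"
    using assms xy by (simp only:) (intro inversion_swap_away, auto)
  thus ?thesis by (simp add: defect_def inversion_indicator_def)
qed

text \<open>For a third box k of column c the four defects of pairs joining k to the swapped boxes
  cancel: when the two swapped boxes relate to k in the same way the swap is invisible, and
  otherwise the entry of k lies outside their range, where gains and losses balance.\<close>

lemma defect_column_cancel:
  assumes agree: middle_agreement and kB: "k \<in> B" and kc: "snd k = c"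
    and kn: "k \<notin> {lowbox, upbox}"
  shows "defect lowbox k + defect upbox k + defect k lowbox + defect k upbox = 0"
proof -
  define i where "i = \<rho> lowbox"
  define j where "j = \<rho> upbox"
  define v where "v = \<rho> k"
  define Pl where "Pl = inversion_shape Y \<rho> lowbox k"
  define Pu where "Pu = inversion_shape Y \<rho> upbox k"
  have swap_k: "\<pi> k = k" using kc kn by (cases k) (auto simp: swap_rows_def)
  have vij: "v \<noteq> i" "v \<noteq> j"
    using tableau_inj_on[OF tab] kB low_box up_box kn by (auto simp: v_def i_def j_def dest: inj_onD)
  have shape_kl: "inversion_shape Y \<rho> k lowbox \<longleftrightarrow> \<not> Pl"
    using inversion_shape_total[OF tab kB low_box] kn kc by (auto simp: Pl_def)
  have shape_ku: "inversion_shape Y \<rho> k upbox \<longleftrightarrow> \<not> Pu"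
    using inversion_shape_total[OF tab kB up_box] kn kc by (auto simp: Pu_def)
  have column: "x \<in> B \<and> snd x = c" if "x \<in> {lowbox, upbox, k}" for x
    using that kB kc low_box up_box by auto
  have defect_col: "defect x y = of_bool (\<sigma> x < \<sigma> y \<and> inversion_shape Y \<rho> x y)
      - of_bool (\<rho> (\<pi> x) < \<rho> (\<pi> y) \<and> inversion_shape Y \<rho> (\<pi> x) (\<pi> y))"
    if "x \<in> {lowbox, upbox, k}" "y \<in> {lowbox, upbox, k}" for x y
  proof -
    have "\<pi> x \<in> {lowbox, upbox, k}" "\<pi> y \<in> {lowbox, upbox, k}" using that swap_k by auto
    then show ?thesis
      using column[OF that(1)] column[OF that(2)] column[of "\<pi> x"] column[of "\<pi> y"]
      by (simp add: defect_def inversion_indicator_def inversion_boxes_iff inversion_shape_swap)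
  qed
  have "defect lowbox k = of_bool (j < v \<and> Pl) - of_bool (j < v \<and> Pu)"
    using defect_col[of lowbox k] swap_k by (simp add: i_def j_def v_def Pl_def Pu_def)
  moreover have "defect upbox k = of_bool (i < v \<and> Pu) - of_bool (i < v \<and> Pl)"
    using defect_col[of upbox k] swap_k by (simp add: i_def j_def v_def Pl_def Pu_def)
  moreover have "defect k lowbox = of_bool (v < j \<and> \<not> Pl) - of_bool (v < j \<and> \<not> Pu)"
    using defect_col[of k lowbox] swap_k shape_kl shape_ku by (simp add: i_def j_def v_def)
  moreover have "defect k upbox = of_bool (v < i \<and> \<not> Pu) - of_bool (v < i \<and> \<not> Pl)"
    using defect_col[of k upbox] swap_k shape_kl shape_ku by (simp add: i_def j_def v_def)
  moreover have "Pl = Pu \<or> ((i < v \<longleftrightarrow> j < v) \<and> (v < i \<longleftrightarrow> v < j))"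
    using agree kB kc kn vij
    by (auto simp: middle_agreement_def i_def j_def v_def Pl_def Pu_def min_def max_def split: if_splits)
  ultimately show ?thesis by auto
qed

lemma defect_cross_cancel:
  assumes middle_agreement and kB: "k \<in> B - {lowbox, upbox}"
  shows "defect lowbox k + defect upbox k + defect k lowbox + defect k upbox = 0"
proof (cases "snd k = c")
  case True
  then show ?thesis using defect_column_cancel assms by blast
next
  case False
  then show ?thesis using kB low_box up_box by (simp add: defect_away)
qed

lemma defect_swapped_pair:
  "defect lowbox upbox + defect upbox lowbox =
     (if (\<rho> lowbox < \<rho> upbox) = inversion_shape Y \<rho> lowbox upbox then -1 else 1)"
proof -
  have ij: "\<rho> lowbox \<noteq> \<rho> upbox"
    using tableau_inj_on[OF tab] low_box up_box boxes_distinct by (auto dest: inj_onD)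
  have shape: "inversion_shape Y \<rho> upbox lowbox \<longleftrightarrow> \<not> inversion_shape Y \<rho> lowbox upbox"
    using inversion_shape_total[OF tab up_box low_box] boxes_distinct by auto
  show ?thesis
    using ij shape low_box up_box inversion_shape_swap[of lowbox upbox] inversion_shape_swap[of upbox lowbox]
    by (auto simp: defect_def inversion_indicator_def inversion_boxes_iff)
qed

lemma n_inv_swap_change:
  assumes middle_agreement
  shows "int (n_inv Y \<sigma>) - int (n_inv Y \<rho>) =
     (if (\<rho> lowbox < \<rho> upbox) = inversion_shape Y \<rho> lowbox upbox then -1 else 1)"
proof -
  have "(\<Sum>x\<in>B. \<Sum>y\<in>B. defect x y) = defect lowbox upbox + defect upbox lowbox
      + (\<Sum>k\<in>B - {lowbox, upbox}. defect lowbox k + defect upbox k + defect k lowbox + defect k upbox)"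
    using finite_boxes low_box up_box boxes_distinct
    by (rule sum_square_two_points) (auto simp: defect_away defect_diag)
  also have "(\<Sum>k\<in>B - {lowbox, upbox}. defect lowbox k + defect upbox k + defect k lowbox + defect k upbox) = 0"
    using defect_cross_cancel[OF assms] by simp
  finally show ?thesis using n_inv_swap_diff defect_swapped_pair by simp
qed

end

definition column_condition :: "nat list \<Rightarrow> tableau \<Rightarrow> nat \<Rightarrow> nat \<Rightarrow> nat \<Rightarrow> bool" where
  "column_condition Y \<tau> c i j \<longleftrightarrow> (\<forall>k \<in> col_entries Y \<tau> c. min i j < k \<and> k < max i j \<longrightarrow>
     is_inversion Y \<tau> (min i j) k \<noteq> is_inversion Y \<tau> k (max i j))"

lemma ex_positive_row:
  "(\<exists>r c. A r c \<and> B r c \<and> 0 < r \<and> C r c) \<longleftrightarrow> (\<exists>u c. A (Suc u) c \<and> B (Suc u) c \<and> C (Suc u) c)"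
  by (metis gr0_conv_Suc zero_less_Suc)

lemma D_iff:
  "\<tau> \<in> D Y i \<longleftrightarrow> row_standard Y \<tau> \<and> (\<exists>u c. (Suc u, c) \<in> boxes Y \<and> \<tau> (Suc u, c) = i \<and>
     ((Suc u, Suc c) \<in> boxes Y \<longrightarrow> \<tau> (u, c) < \<tau> (Suc u, Suc c)) \<and>
     ((u, Suc c) \<in> boxes Y \<longrightarrow> i < \<tau> (u, Suc c)) \<and>
     column_condition Y \<tau> c i (\<tau> (u, c)))"
  unfolding D_def column_condition_def Let_def mem_Collect_eq ex_positive_row diff_Suc_1 ..

context row_swap
begin

lemma middle_box_condition:
  assumes kB: "k \<in> B" and kc: "snd k = c" and kn: "k \<notin> {lowbox, upbox}"
    and between: "min (\<rho> lowbox) (\<rho> upbox) < \<rho> k" "\<rho> k < max (\<rho> lowbox) (\<rho> upbox)"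
  shows "(is_inversion Y \<rho> (min (\<rho> lowbox) (\<rho> upbox)) (\<rho> k) \<noteq>
            is_inversion Y \<rho> (\<rho> k) (max (\<rho> lowbox) (\<rho> upbox)))
         \<longleftrightarrow> (inversion_shape Y \<rho> lowbox k \<longleftrightarrow> inversion_shape Y \<rho> upbox k)"
proof -
  have shape_kl: "inversion_shape Y \<rho> k lowbox \<longleftrightarrow> \<not> inversion_shape Y \<rho> lowbox k"
    using inversion_shape_total[OF tab kB low_box] kn kc by auto
  have shape_ku: "inversion_shape Y \<rho> k upbox \<longleftrightarrow> \<not> inversion_shape Y \<rho> upbox k"
    using inversion_shape_total[OF tab kB up_box] kn kc by auto
  have inv: "is_inversion Y \<rho> (\<rho> x) (\<rho> y) \<longleftrightarrow> \<rho> x < \<rho> y \<and> inversion_shape Y \<rho> x y"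
    if "x \<in> {lowbox, upbox, k}" "y \<in> {lowbox, upbox, k}" for x y
  proof -
    have "x \<in> B" "y \<in> B" "snd x = c" "snd y = c" using that kB kc low_box up_box by auto
    then show ?thesis by (simp add: is_inversion_iff[OF tab] inversion_boxes_iff)
  qed
  show ?thesis
  proof (cases "\<rho> lowbox < \<rho> upbox")
    case True
    then show ?thesis using between inv[of lowbox k] inv[of k upbox] shape_ku by auto
  next
    case False
    then show ?thesis using between inv[of upbox k] inv[of k lowbox] shape_kl by auto
  qed
qed

lemma column_condition_iff_agreement:
  "column_condition Y \<rho> c (\<rho> lowbox) (\<rho> upbox) \<longleftrightarrow> middle_agreement"
proof
  assume cond: "column_condition Y \<rho> c (\<rho> lowbox) (\<rho> upbox)"
  show middle_agreement
    unfolding middle_agreement_def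
  proof (intro ballI impI)
    fix k assume k: "k \<in> B" "snd k = c" "k \<notin> {lowbox, upbox}"
      and between: "min (\<rho> lowbox) (\<rho> upbox) < \<rho> k" "\<rho> k < max (\<rho> lowbox) (\<rho> upbox)"
    have "\<rho> k \<in> col_entries Y \<rho> c" using k by (cases k) (auto simp: col_entries_def)
    then show "inversion_shape Y \<rho> lowbox k \<longleftrightarrow> inversion_shape Y \<rho> upbox k"
      using cond between middle_box_condition[OF k between] by (simp add: column_condition_def)
  qed
next
  assume agree: middle_agreement
  show "column_condition Y \<rho> c (\<rho> lowbox) (\<rho> upbox)"
    unfolding column_condition_def
  proof (intro ballI impI)
    fix w assume "w \<in> col_entries Y \<rho> c"
      and between: "min (\<rho> lowbox) (\<rho> upbox) < w \<and> w < max (\<rho> lowbox) (\<rho> upbox)"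
    then obtain s where s: "(s, c) \<in> B" "w = \<rho> (s, c)" by (auto simp: col_entries_def)
    have "(s, c) \<notin> {lowbox, upbox}" using s between by auto
    then show "is_inversion Y \<rho> (min (\<rho> lowbox) (\<rho> upbox)) w \<noteq>
        is_inversion Y \<rho> w (max (\<rho> lowbox) (\<rho> upbox))"
      using middle_box_condition[of "(s, c)"] agree s between by (auto simp: middle_agreement_def)
  qed
qed

end

lemma delta_n_inv_bound:
  assumes young: "young_diagram Y" and inD: "\<rho> \<in> D Y i"
  shows "n_inv Y \<rho> \<le> n_inv Y (delta Y i \<rho>) + 1"
proof -
  obtain u c where rs: "row_standard Y \<rho>" and box: "(Suc u, c) \<in> boxes Y"
    and entry: "\<rho> (Suc u, c) = i" and cond: "column_condition Y \<rho> c i (\<rho> (u, c))"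
    using inD by (auto simp: D_iff)
  interpret row_swap Y \<rho> u c using young rs box by unfold_locales
  have middle_agreement using cond entry column_condition_iff_agreement by simp
  then have "int (n_inv Y \<sigma>) - int (n_inv Y \<rho>) \<in> {-1, 1}" by (simp add: n_inv_swap_change)
  moreover have "delta Y i \<rho> = \<sigma>" using delta_eq_swap entry by simp
  ultimately show ?thesis by auto
qed

lemma inversion_shape_increasing_right:
  assumes young: "young_diagram Y" and inc: "column_increasing Y \<tau> (Suc c)"
  shows "s < a \<Longrightarrow> inversion_shape Y \<tau> (a, c) (s, c)"
    and "a < s \<Longrightarrow> \<not> inversion_shape Y \<tau> (a, c) (s, c)"
  using column_increasing_less[OF young inc, of a s] column_increasing_less[OF young inc, of s a]
  by (auto simp: inversion_shape_def)

context row_swap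
begin

lemma descent_row_conditions:
  assumes descent: "\<rho> lowbox < \<rho> upbox" and inc: "column_increasing Y \<rho> (Suc c)"
  shows "(Suc u, Suc c) \<in> B \<Longrightarrow> \<rho> upbox < \<rho> (Suc u, Suc c)"
    and "(u, Suc c) \<in> B \<Longrightarrow> \<rho> lowbox < \<rho> (u, Suc c)"
proof -
  assume box: "(Suc u, Suc c) \<in> B"
  have "\<rho> upbox < \<rho> (u, Suc c)"
    using row_standard_less[OF rs] box_upward_closed[OF young box] by simp
  also have "\<dots> < \<rho> (Suc u, Suc c)" using inc box by (simp add: column_increasing_def)
  finally show "\<rho> upbox < \<rho> (Suc u, Suc c)" .
next
  assume "(u, Suc c) \<in> B"
  then show "\<rho> lowbox < \<rho> (u, Suc c)" using descent row_standard_less[OF rs] by fastforce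
qed

text \<open>Since column c + 1 increases, every other box of column c is in the same shape relation
  to the two swapped boxes: boxes above both are related to both, boxes below to neither.\<close>

lemma descent_shape_agreement:
  assumes inc: "column_increasing Y \<rho> (Suc c)"
    and kc: "snd k = c" and kn: "k \<notin> {lowbox, upbox}"
  shows "inversion_shape Y \<rho> lowbox k \<longleftrightarrow> inversion_shape Y \<rho> upbox k"
proof -
  obtain s where ks: "k = (s, c)" using kc by (metis prod.collapse)
  have "s \<noteq> Suc u" "s \<noteq> u" using ks kn by auto
  then consider "s < u" | "Suc u < s" by linarith
  then show ?thesis
    using inversion_shape_increasing_right[OF young inc] ks by cases auto
qed

lemma descent_pair_shape:
  assumes inc: "column_increasing Y \<rho> (Suc c)"
  shows "inversion_shape Y \<rho> lowbox upbox"
  using inversion_shape_increasing_right(1)[OF young inc] by simp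

lemma descent_step:
  assumes descent: "\<rho> lowbox < \<rho> upbox" and inc: "column_increasing Y \<rho> (Suc c)"
  shows "\<rho> \<in> D Y (\<rho> lowbox)" and "n_inv Y \<sigma> + 1 = n_inv Y \<rho>" and "row_standard Y \<sigma>"
proof -
  have agree: middle_agreement
    using descent_shape_agreement[OF inc] by (auto simp: middle_agreement_def)
  then have "column_condition Y \<rho> c (\<rho> lowbox) (\<rho> upbox)"
    using column_condition_iff_agreement by simp
  then show "\<rho> \<in> D Y (\<rho> lowbox)"
    unfolding D_iff using rs low_box descent_row_conditions[OF descent inc] by blast
  show "n_inv Y \<sigma> + 1 = n_inv Y \<rho>"
    using n_inv_swap_change[OF agree] descent descent_pair_shape[OF inc] by simp
  show "row_standard Y \<sigma>"
    using swap_row_standard descent_row_conditions[OF descent inc] by blast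
qed

end

lemma rightmost_descent:
  assumes young: "young_diagram Y" and tab: "tableau Y \<tau>" and nonstd: "\<not> standard Y \<tau>"
  obtains u c where "(Suc u, c) \<in> boxes Y" "\<tau> (Suc u, c) < \<tau> (u, c)"
    "column_increasing Y \<tau> (Suc c)"
proof -
  define S where "S = {c. \<not> column_increasing Y \<tau> c}"
  have "S \<subseteq> snd ` boxes Y"
    by (auto simp: S_def column_increasing_def intro: rev_image_eqI)
  then have finS: "finite S" using finite_subset finite_boxes by blast
  have "S \<noteq> {}" using nonstd by (auto simp: S_def standard_def)
  then have cS: "Max S \<in> S" using finS by simp
  have inc: "column_increasing Y \<tau> (Suc (Max S))"
    using Max_ge[OF finS, of "Suc (Max S)"] by (auto simp: S_def)
  obtain u where box: "(Suc u, Max S) \<in> boxes Y" and desc: "\<not> \<tau> (u, Max S) < \<tau> (Suc u, Max S)"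
    using cS by (auto simp: S_def column_increasing_def)
  have "(u, Max S) \<in> boxes Y" using box_upward_closed[OF young box] by simp
  then have "\<tau> (u, Max S) \<noteq> \<tau> (Suc u, Max S)"
    using tableau_inj_on[OF tab] box by (auto dest: inj_onD)
  then show ?thesis using that box desc inc by simp
qed

lemma delta_step_exists:
  assumes young: "young_diagram Y" and rs: "row_standard Y \<tau>" and nonstd: "\<not> standard Y \<tau>"
  shows "\<exists>i. \<tau> \<in> D Y i \<and> n_inv Y (delta Y i \<tau>) + 1 = n_inv Y \<tau> \<and>
             row_standard Y (delta Y i \<tau>) \<and> st Y (delta Y i \<tau>) = st Y \<tau>"
proof -
  obtain u c where box: "(Suc u, c) \<in> boxes Y" and descent: "\<tau> (Suc u, c) < \<tau> (u, c)"
    and inc: "column_increasing Y \<tau> (Suc c)"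
    using rightmost_descent[OF young row_standard_tableau[OF rs] nonstd] by blast
  interpret row_swap Y \<tau> u c using young rs box by unfold_locales
  show ?thesis
    using descent_step[OF descent inc] delta_eq_swap swap_st by (intro exI[of _ "\<tau> lowbox"]) simp
qed

text \<open>A delta applied first goes to the end of the list, since lists are applied right to left.\<close>

lemma delta_seq_snoc:
  "delta_seq Y ws (delta Y i \<tau>) \<sigma> \<Longrightarrow> \<tau> \<in> D Y i \<Longrightarrow> delta_seq Y (ws @ [i]) \<tau> \<sigma>"
  by (induction ws arbitrary: \<sigma>) auto

lemma delta_seq_to_st:
  assumes young: "young_diagram Y" and rs: "row_standard Y \<tau>"
  shows "\<exists>ws. delta_seq Y ws \<tau> (st Y \<tau>) \<and> length ws = n_inv Y \<tau> \<and> standard Y (st Y \<tau>)"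
  using rs
proof (induction "n_inv Y \<tau>" arbitrary: \<tau> rule: less_induct)
  case less
  show ?case
  proof (cases "standard Y \<tau>")
    case True
    have "st Y \<tau> = \<tau>" using standard_st[OF young True row_standard_tableau[OF less.prems]] .
    then show ?thesis using True standard_n_inv[OF young True] by (intro exI[of _ "[]"]) simp
  next
    case False
    then obtain i where i: "\<tau> \<in> D Y i" "n_inv Y (delta Y i \<tau>) + 1 = n_inv Y \<tau>"
      "row_standard Y (delta Y i \<tau>)" "st Y (delta Y i \<tau>) = st Y \<tau>"
      using delta_step_exists[OF young less.prems] by blast
    then obtain ws where "delta_seq Y ws (delta Y i \<tau>) (st Y \<tau>)"
      "length ws = n_inv Y (delta Y i \<tau>)" "standard Y (st Y \<tau>)"
      using less.hyps[of "delta Y i \<tau>"] by auto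
    then show ?thesis using i delta_seq_snoc by (intro exI[of _ "ws @ [i]"]) auto
  qed
qed

text \<open>Since each delta removes at most one inversion, a sequence of deltas is at least as long
  as the drop in n_inv it achieves.\<close>

lemma delta_seq_n_inv_bound:
  assumes young: "young_diagram Y"
  shows "delta_seq Y ws \<tau> \<sigma> \<Longrightarrow> n_inv Y \<tau> \<le> length ws + n_inv Y \<sigma>"
proof (induction ws arbitrary: \<sigma>)
  case (Cons w ws)
  then obtain \<rho> where "delta_seq Y ws \<tau> \<rho>" "\<rho> \<in> D Y w" "\<sigma> = delta Y w \<rho>" by auto
  then show ?case using Cons.IH delta_n_inv_bound[OF young] by fastforce
qed simp

theorem proposition2p2:
  fixes Y :: "nat list" and \<tau> :: tableau
  assumes "young_diagram Y" and "row_standard Y \<tau>"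
  shows "(\<exists>ws. delta_seq Y ws \<tau> (st Y \<tau>) \<and> length ws = n_inv Y \<tau>) \<and>
         (\<forall>ws. delta_seq Y ws \<tau> (st Y \<tau>) \<longrightarrow> n_inv Y \<tau> \<le> length ws)"
proof -
  obtain ws where "delta_seq Y ws \<tau> (st Y \<tau>)" "length ws = n_inv Y \<tau>"
    and std: "standard Y (st Y \<tau>)"
    using delta_seq_to_st[OF assms] by blast
  moreover have "n_inv Y (st Y \<tau>) = 0" using standard_n_inv[OF assms(1) std] .
  ultimately show ?thesis using delta_seq_n_inv_bound[OF assms(1)] by fastforce
qed

end
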